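(* Let $G$ be a finite group and let $M,N$ be normal subgroups with $1<M\le N<G$ such that every $g\in G\setminus N$ is conjugate in $G$ to every element of $gM$. If $G/N$ is not a $p$-group for any prime $p$, then $M\cap Z(G)=\{1\}$. *)

theory Defs
  imports "HOL-Algebra.Algebra"
begin

definition group_center :: "('a, 'b) monoid_scheme \<Rightarrow> 'a set" where
  "group_center G = {z \<in> carrier G. \<forall>g \<in> carrier G. z \<otimes>\<^bsub>G\<^esub> g = g \<otimes>\<^bsub>G\<^esub> z}"

definition conjugate_in :: "('a, 'b) monoid_scheme \<Rightarrow> 'a \<Rightarrow> 'a \<Rightarrow> bool" where
  "conjugate_in G x y \<longleftrightarrow>
     (\<exists>h \<in> carrier G. y = h \<otimes>\<^bsub>G\<^esub> x \<otimes>\<^bsub>G\<^esub> inv\<^bsub>G\<^esub> h)"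

definition is_p_group :: "('a, 'b) monoid_scheme \<Rightarrow> nat \<Rightarrow> bool" where
  "is_p_group G p \<longleftrightarrow> Factorial_Ring.prime p \<and> finite (carrier G) \<and> (\<exists>k. order G = p ^ k)"

end

theory Submission
  imports Defs "HOL-Computational_Algebra.Primes"
begin

text \<open>
  Suppose \<open>z \<noteq> 1\<close> lies in \<open>M \<inter> Z(G)\<close> and let \<open>p\<close> be a prime divisor of its order.
  For \<open>g \<notin> N\<close> the element \<open>gz\<close> is conjugate to \<open>g\<close>, so \<open>z ^ |g| = (gz) ^ |g| = 1\<close>
  because \<open>z\<close> is central; hence \<open>|z|\<close> divides the order of every element outside \<open>N\<close>.
  Since \<open>G/N\<close> is not a \<open>p\<close>-group, some prime \<open>q \<noteq> p\<close> divides \<open>|G/N|\<close>, so a Sylow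
  \<open>q\<close>-subgroup of \<open>G\<close> is not contained in \<open>N\<close> and contains an element outside \<open>N\<close> of
  \<open>q\<close>-power order, which \<open>|z|\<close> cannot divide.
\<close>

lemma exists_other_prime_dvd:
  fixes n p :: nat
  assumes "n \<noteq> 0" and "Factorial_Ring.prime p" and "\<And>k. n \<noteq> p ^ k"
  obtains q where "Factorial_Ring.prime q" "q \<noteq> p" "q dvd n"
proof -
  obtain y where y: "n = p ^ multiplicity p n * y" "\<not> p dvd y"
    using multiplicity_decompose'[of n p] assms(1,2) by (metis not_prime_unit)
  with assms(3) have "y \<noteq> 1" by (metis mult.right_neutral)
  then obtain q where "Factorial_Ring.prime q" "q dvd y" using prime_factor_nat by blast
  moreover from y(2) \<open>q dvd y\<close> have "q \<noteq> p" by auto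
  moreover from \<open>q dvd y\<close> have "q dvd n" by (subst y(1)) (rule dvd_mult)
  ultimately show thesis using that by blast
qed

context group
begin

lemma conj_nat_pow:
  assumes "h \<in> carrier G" "g \<in> carrier G"
  shows "(h \<otimes> g \<otimes> inv h) [^] (n::nat) = h \<otimes> g [^] n \<otimes> inv h"
proof (induction n)
  case 0
  then show ?case using assms by simp
next
  case (Suc n)
  have cancel: "inv h \<otimes> (h \<otimes> x) = x" if "x \<in> carrier G" for x
    using assms that by (simp add: m_assoc[symmetric])
  have "(h \<otimes> g \<otimes> inv h) [^] Suc n = (h \<otimes> g [^] n \<otimes> inv h) \<otimes> (h \<otimes> g \<otimes> inv h)"
    using Suc by simp
  also have "\<dots> = h \<otimes> g [^] Suc n \<otimes> inv h"
    using assms by (simp add: m_assoc cancel)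
  finally show ?case .
qed

lemma ord_dvd_if_conjugate_mult_commuting:
  assumes g: "g \<in> carrier G" and z: "z \<in> carrier G"
    and comm: "g \<otimes> z = z \<otimes> g" and conj: "conjugate_in G g (g \<otimes> z)"
  shows "ord z dvd ord g"
proof -
  obtain h where h: "h \<in> carrier G" "g \<otimes> z = h \<otimes> g \<otimes> inv h"
    using conj unfolding conjugate_in_def by blast
  have "z [^] ord g = (g \<otimes> z) [^] ord g"
    using pow_mult_distrib[OF comm g z] g z by simp
  also have "\<dots> = \<one>"
    using h conj_nat_pow[OF h(1) g] g by simp
  finally show ?thesis using pow_eq_id[OF z] by simp
qed

lemma card_subgroup_dvd:
  assumes "subgroup I G" "subgroup J G" "I \<subseteq> J"
  shows "card I dvd card J"
proof -
  have "group (G\<lparr>carrier := J\<rparr>)" using assms(2) subgroup_imp_group by blast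
  moreover have "subgroup I (G\<lparr>carrier := J\<rparr>)" using subgroup_incl assms by blast
  ultimately have "card (rcosets\<^bsub>G\<lparr>carrier := J\<rparr>\<^esub> I) * card I = card J"
    using group.lagrange unfolding order_def by fastforce
  then show ?thesis by (metis dvd_triv_right)
qed

lemma order_FactGroup_mult_card:
  assumes "subgroup N G"
  shows "order (G Mod N) * card N = order G"
  using assms by (simp add: FactGroup_def lagrange order_def)

lemma exists_prime_power_ord_outside_subgroup:
  assumes fin: "finite (carrier G)" and N: "subgroup N G"
    and q: "Factorial_Ring.prime q" "q dvd order (G Mod N)"
  obtains x k where "x \<in> carrier G - N" "ord x = q ^ k"
proof -
  define a where "a = multiplicity q (order G)"
  have "order G \<noteq> 0" using fin order_gt_0_iff_finite by simp
  then obtain m where m: "order G = q ^ a * m" "\<not> q dvd m"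
    unfolding a_def using multiplicity_decompose' q(1) by (metis not_prime_unit)
  obtain Q where Q: "subgroup Q G" "card Q = q ^ a"
    using sylow_thm[OF q(1) is_group m(1) fin] by blast
  have "\<not> Q \<subseteq> N"
  proof
    assume "Q \<subseteq> N"
    then have "q ^ a dvd card N" using card_subgroup_dvd[OF Q(1) N] Q(2) by simp
    then have "q ^ a * q dvd q ^ a * m"
      using q(2) order_FactGroup_mult_card[OF N] m(1) by (metis mult.commute mult_dvd_mono)
    then have "q dvd m" using q(1) by (simp add: prime_gt_0_nat)
    with m(2) show False ..
  qed
  then obtain x where x: "x \<in> Q" "x \<notin> N" by blast
  have xG: "x \<in> carrier G" using x(1) Q(1) subgroup.subset by blast
  have "generate G {x} \<subseteq> Q" using generate_subgroup_incl[of "{x}" Q] Q(1) x(1) by blast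
  then have "ord x dvd q ^ a"
    using card_subgroup_dvd[OF generate_is_subgroup Q(1)] generate_pow_card[OF xG] Q(2) xG
    by auto
  then obtain k where "ord x = q ^ k" using divides_primepow_nat[OF q(1)] by blast
  with x(2) xG show thesis by (intro that) auto
qed

end

theorem mainTheorem13:
  fixes G :: "('a, 'b) monoid_scheme" and M N :: "'a set"
  assumes "group G"
    and "finite (carrier G)"
    and "M \<lhd> G" and "N \<lhd> G"
    and "{\<one>\<^bsub>G\<^esub>} \<subset> M" and "M \<subseteq> N" and "N \<subset> carrier G"
    and "\<And>g m. g \<in> carrier G - N \<Longrightarrow> m \<in> M \<Longrightarrow> conjugate_in G g (g \<otimes>\<^bsub>G\<^esub> m)"
    and "\<And>p::nat. Factorial_Ring.prime p \<Longrightarrow> \<not> is_p_group (G Mod N) p"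
  shows "M \<inter> group_center G = {\<one>\<^bsub>G\<^esub>}"
proof (rule ccontr)
  interpret group G by fact
  have M: "subgroup M G" and N: "subgroup N G"
    using assms(3,4) normal_imp_subgroup by blast+
  assume "M \<inter> group_center G \<noteq> {\<one>\<^bsub>G\<^esub>}"
  moreover have "\<one>\<^bsub>G\<^esub> \<in> M \<inter> group_center G"
    using subgroup.one_closed[OF M] unfolding group_center_def by simp
  ultimately obtain z where z: "z \<in> M" "z \<in> group_center G" "z \<noteq> \<one>\<^bsub>G\<^esub>" by blast
  have zG: "z \<in> carrier G" using z(1) M subgroup.subset by blast
  have "ord z \<noteq> 1" using z(3) zG pow_ord_eq_1[OF zG] by (metis nat_pow_eone)
  then obtain p where p: "Factorial_Ring.prime p" "p dvd ord z" using prime_factor_nat by blast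
  have "order (G Mod N) \<noteq> 0"
    using order_FactGroup_mult_card[OF N] assms(2) order_gt_0_iff_finite by (metis mult_0 not_gr0)
  moreover have "order (G Mod N) \<noteq> p ^ k" for k
    using assms(9)[OF p(1)] \<open>order (G Mod N) \<noteq> 0\<close> p(1)
    unfolding is_p_group_def order_def by (meson card.infinite)
  ultimately obtain q where q: "Factorial_Ring.prime q" "q \<noteq> p" "q dvd order (G Mod N)"
    using exists_other_prime_dvd p(1) by metis
  obtain x k where x: "x \<in> carrier G - N" "ord x = q ^ k"
    using exists_prime_power_ord_outside_subgroup[OF assms(2) N q(1,3)] .
  have "ord z dvd ord x"
    using ord_dvd_if_conjugate_mult_commuting assms(8)[OF x(1) z(1)] x(1) zG z(2)
    unfolding group_center_def by auto
  with p x(2) have "p dvd q" by (metis dvd_trans prime_dvd_power)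
  with p(1) q(1,2) show False using primes_dvd_imp_eq by blast
qed

end
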